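(* Let $P$ be an interrupt-driven program as described in the context. Let $l$ be a load of a global variable $v$ in handler $T_i$, and let $s$ be a store to $v$ in handler $T_j$ with $i \neq j$. Suppose at least one of the following holds: (1) $l$ is a covered load and $s$ is an intercepted store; (2) $l$ is a covered load and $p_j \le p_i$; (3) $s$ is an intercepted store and $p_i \le p_j$. Then in no execution of $P$ under the interrupt semantics does an executed instance of $l$ read from an executed instance of $s$. That is, $\mathrm{MustNotReadFrom}(l,s)$ is sound.
   Context: An interrupt-driven program $P$ consists of finitely many interrupt handlers $T_1,\dots,T_n$. Each handler $T_i$ is a sequential program given by a control-flow graph $\langle N_i, n^i_0, \delta_i\rangle$ with entry node $n^i_0$ and an exit node. Handlers access local variables and shared global variables. Each handler $T_i$ has an integer priority $p_i$, and each statement belongs to exactly one handler. An invocation of $T_i$ executes statements one at a time along a path of its control-flow graph from $n^i_0$, and it completes on reaching the exit node. Interrupt semantics: an execution is a finite sequence of steps, each executing one statement of some invocation. Invocations of any handler may be started any number of times. At every moment, the started-but-not-completed invocations form a stack whose handler priorities are strictly increasing from bottom to top. Only the top invocation may take a step. A new invocation of $T_j$ may be started only if the stack is empty or $p_j$ is strictly greater than the priority of the top invocation's handler. An invocation is popped when it completes. Thus a handler can only be preempted by a handler of strictly higher priority, and invocations nest. Reads-from: in an execution, an executed instance of a load of $v$ reads from an executed instance of a store to $v$ if that store instance is the last store to $v$ executed before the load instance. Dominance and post-dominance are taken within a single handler's control-flow graph. A statement $a$ dominates $b$ if every path from the entry node to $b$ passes through $a$. A statement $a \neq b$ post-dominates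 $b$ if every path from $b$ to the exit node passes through $a$ after $b$. A load $l$ of $v$ in $T_i$ is a covered load if some store to $v$ in $T_i$ dominates $l$. A store $s$ to $v$ in $T_j$ is an intercepted store if some other store $s_2 \neq s$ to $v$ in $T_j$ post-dominates $s$. *)

theory Defs
  imports Main
begin

text \<open>Kinds of statements with respect to global variables 'v.  Statements that only
touch local variables (or do not access memory) are of kind Other.\<close>
datatype 'v skind = Load 'v | Store 'v | Other

text \<open>A program: handlers of type 'h, statements (= CFG nodes) of type 's, global
variables of type 'v.\<close>
record ('h, 's, 'v) program =
  prio :: "'h \<Rightarrow> int"
  owner :: "'s \<Rightarrow> 'h"
  entry_node :: "'h \<Rightarrow> 's"
  exit_node :: "'h \<Rightarrow> 's"
  succ :: "'s \<Rightarrow> 's set"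
  skind :: "'s \<Rightarrow> 'v skind"

definition wf_program :: "('h, 's, 'v) program \<Rightarrow> bool" where
  "wf_program P \<longleftrightarrow>
     finite (UNIV :: 'h set) \<and> finite (UNIV :: 's set) \<and>
     (\<forall>h. owner P (entry_node P h) = h \<and> owner P (exit_node P h) = h) \<and>
     (\<forall>a b. b \<in> succ P a \<longrightarrow> owner P b = owner P a)"

fun cfg_path :: "('h, 's, 'v) program \<Rightarrow> 's list \<Rightarrow> bool" where
  "cfg_path P [] = False"
| "cfg_path P [x] = True"
| "cfg_path P (x # y # xs) = (y \<in> succ P x \<and> cfg_path P (y # xs))"

definition dominates :: "('h, 's, 'v) program \<Rightarrow> 's \<Rightarrow> 's \<Rightarrow> bool" where
  "dominates P a b \<longleftrightarrow> owner P a = owner P b \<and>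
     (\<forall>xs. cfg_path P xs \<and> hd xs = entry_node P (owner P b) \<and> last xs = b \<longrightarrow> a \<in> set xs)"

definition post_dominates :: "('h, 's, 'v) program \<Rightarrow> 's \<Rightarrow> 's \<Rightarrow> bool" where
  "post_dominates P a b \<longleftrightarrow> a \<noteq> b \<and> owner P a = owner P b \<and>
     (\<forall>xs. cfg_path P xs \<and> hd xs = b \<and> last xs = exit_node P (owner P b) \<longrightarrow> a \<in> set (tl xs))"

definition covered_load :: "('h, 's, 'v) program \<Rightarrow> 's \<Rightarrow> bool" where
  "covered_load P l \<longleftrightarrow> (\<exists>v s'. skind P l = Load v \<and> skind P s' = Store v \<and>
     owner P s' = owner P l \<and> dominates P s' l)"

definition intercepted_store :: "('h, 's, 'v) program \<Rightarrow> 's \<Rightarrow> bool" where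
  "intercepted_store P s \<longleftrightarrow> (\<exists>v s2. skind P s = Store v \<and> skind P s2 = Store v \<and>
     s2 \<noteq> s \<and> owner P s2 = owner P s \<and> post_dominates P s2 s)"

text \<open>A configuration is the stack of started-but-not-completed invocations, top first.
A frame (h, n) is an invocation of handler h whose next statement to execute is n.
Starting an invocation is not a step (produces no statement); executing a statement is.\<close>
inductive istep :: "('h, 's, 'v) program \<Rightarrow> ('h \<times> 's) list \<Rightarrow> 's option \<Rightarrow> ('h \<times> 's) list \<Rightarrow> bool"
  for P where
  start: "stk = [] \<or> prio P (fst (hd stk)) < prio P h
          \<Longrightarrow> istep P stk None ((h, entry_node P h) # stk)"
| exec_exit: "n = exit_node P h \<Longrightarrow> istep P ((h, n) # stk) (Some n) stk"
| exec_next: "n \<noteq> exit_node P h \<Longrightarrow> n' \<in> succ P n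
              \<Longrightarrow> istep P ((h, n) # stk) (Some n) ((h, n') # stk)"

inductive execution :: "('h, 's, 'v) program \<Rightarrow> ('h \<times> 's) list \<Rightarrow> 's list \<Rightarrow> bool"
  for P where
  init: "execution P [] []"
| step: "execution P stk tr \<Longrightarrow> istep P stk e stk' \<Longrightarrow>
         execution P stk' (tr @ (case e of None \<Rightarrow> [] | Some n \<Rightarrow> [n]))"

definition reads_from :: "('h, 's, 'v) program \<Rightarrow> 's list \<Rightarrow> nat \<Rightarrow> nat \<Rightarrow> bool" where
  "reads_from P tr k m \<longleftrightarrow> m < k \<and> k < length tr \<and>
     (\<exists>v. skind P (tr ! k) = Load v \<and> skind P (tr ! m) = Store v \<and>
          (\<forall>m'. m < m' \<and> m' < k \<longrightarrow> skind P (tr ! m') \<noteq> Store v))"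

end

theory Submission
  imports Defs
begin

text \<open>Executions are invariantly nested: once an invocation of a handler h has executed a
statement x, every later statement up to the end of that invocation belongs to h or to a
handler of strictly higher priority, since lower or equal priority handlers cannot start
before h's invocation is popped.  Hence a dominator of a load is executed in the same
invocation before the load, with only higher-priority code in between; and a
post-dominator of a store is executed before any statement of a handler of lower or equal
priority runs.  Both facts are maintained as an invariant of the stack machine, and either
one separates the store from the load by another store to the same variable.\<close>

section \<open>Dominance relative to a handler's control-flow graph\<close>

definition dominates_from :: "('h, 's, 'v) program \<Rightarrow> 'h \<Rightarrow> 's \<Rightarrow> 's \<Rightarrow> bool" where
  "dominates_from P h x n \<longleftrightarrow>
     (\<forall>xs. cfg_path P xs \<and> hd xs = entry_node P h \<and> last xs = n \<longrightarrow> x \<in> set xs)"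

text \<open>Unlike post_dominates, this is reflexive: z may be n itself.\<close>
definition weakly_post_dominates :: "('h, 's, 'v) program \<Rightarrow> 's \<Rightarrow> 's \<Rightarrow> bool" where
  "weakly_post_dominates P z n \<longleftrightarrow>
     (\<forall>xs. cfg_path P xs \<and> hd xs = n \<and> last xs = exit_node P (owner P n) \<longrightarrow> z \<in> set xs)"

lemma cfg_path_nonempty: "cfg_path P xs \<Longrightarrow> xs \<noteq> []"
  by (cases xs) auto

lemma cfg_path_snoc: "cfg_path P xs \<Longrightarrow> y \<in> succ P (last xs) \<Longrightarrow> cfg_path P (xs @ [y])"
  by (induction P xs rule: cfg_path.induct) auto

lemma cfg_path_Cons: "cfg_path P xs \<Longrightarrow> hd xs \<in> succ P n \<Longrightarrow> cfg_path P (n # xs)"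
  by (cases xs) auto

lemma dominates_imp_dominates_from:
  "dominates P x n \<Longrightarrow> dominates_from P (owner P n) x n"
  unfolding dominates_def dominates_from_def by blast

lemma dominates_from_entry:
  "dominates_from P h x (entry_node P h) \<Longrightarrow> x = entry_node P h"
  unfolding dominates_from_def by (drule spec[of _ "[entry_node P h]"]) simp

lemma dominates_from_pred:
  assumes "dominates_from P h x n'" and "n' \<in> succ P n" and "x \<noteq> n'"
  shows "dominates_from P h x n"
  unfolding dominates_from_def
proof (intro allI impI)
  fix xs assume xs: "cfg_path P xs \<and> hd xs = entry_node P h \<and> last xs = n"
  then have "cfg_path P (xs @ [n'])" and "hd (xs @ [n']) = entry_node P h"
    using assms(2) cfg_path_snoc cfg_path_nonempty by fastforce+
  then have "x \<in> set (xs @ [n'])"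
    using assms(1) unfolding dominates_from_def by (metis last_snoc)
  then show "x \<in> set xs" using assms(3) by simp
qed

lemma weakly_post_dominates_exit:
  "weakly_post_dominates P z n \<Longrightarrow> n = exit_node P (owner P n) \<Longrightarrow> z = n"
  unfolding weakly_post_dominates_def by (drule spec[of _ "[n]"]) simp

lemma weakly_post_dominates_succ:
  assumes "weakly_post_dominates P z n" and "z \<noteq> n"
    and "n' \<in> succ P n" and "owner P n' = owner P n"
  shows "weakly_post_dominates P z n'"
  unfolding weakly_post_dominates_def
proof (intro allI impI)
  fix xs assume xs: "cfg_path P xs \<and> hd xs = n' \<and> last xs = exit_node P (owner P n')"
  then have "cfg_path P (n # xs)" and "last (n # xs) = exit_node P (owner P n)"
    using assms(3,4) cfg_path_Cons cfg_path_nonempty by fastforce+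
  then have "z \<in> set (n # xs)"
    using assms(1) unfolding weakly_post_dominates_def by (metis list.sel(1))
  then show "z \<in> set xs" using assms(2) by simp
qed

lemma post_dominates_imp_weakly:
  "post_dominates P z n \<Longrightarrow> weakly_post_dominates P z n \<and> z \<noteq> n"
  unfolding post_dominates_def weakly_post_dominates_def
  by (metis list.set_sel(2) list.sel(2) empty_iff list.set(1))

definition only_own_or_higher_between ::
    "('h, 's, 'v) program \<Rightarrow> 'h \<Rightarrow> 's list \<Rightarrow> nat \<Rightarrow> nat \<Rightarrow> bool" where
  "only_own_or_higher_between P h tr i j \<longleftrightarrow>
     (\<forall>r. i < r \<and> r < j \<longrightarrow> owner P (tr ! r) = h \<or> prio P h < prio P (owner P (tr ! r)))"

lemma only_own_or_higher_between_append:
  "j \<le> length tr \<Longrightarrow>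
   only_own_or_higher_between P h (tr @ ys) i j = only_own_or_higher_between P h tr i j"
  unfolding only_own_or_higher_between_def by (auto simp: nth_append)

lemma only_own_or_higher_between_snoc:
  assumes "only_own_or_higher_between P h tr i (length tr)"
    and "owner P n = h \<or> prio P h < prio P (owner P n)"
  shows "only_own_or_higher_between P h (tr @ [n]) i (Suc (length tr))"
  using assms unfolding only_own_or_higher_between_def by (auto simp: nth_append less_Suc_eq)

section \<open>The execution invariant\<close>

text \<open>Stacks are listed top first, so priorities decrease along the list.\<close>
definition wf_stack :: "('h, 's, 'v) program \<Rightarrow> ('h \<times> 's) list \<Rightarrow> bool" where
  "wf_stack P stk \<longleftrightarrow> (\<forall>h n. (h, n) \<in> set stk \<longrightarrow> owner P n = h) \<and>
     sorted_wrt (\<lambda>a b. prio P (fst b) < prio P (fst a)) stk"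

definition stack_dominators_executed ::
    "('h, 's, 'v) program \<Rightarrow> ('h \<times> 's) list \<Rightarrow> 's list \<Rightarrow> bool" where
  "stack_dominators_executed P stk tr \<longleftrightarrow>
     (\<forall>h n x. (h, n) \<in> set stk \<longrightarrow> x \<noteq> n \<longrightarrow> dominates_from P h x n \<longrightarrow>
        (\<exists>q < length tr. tr ! q = x \<and> only_own_or_higher_between P h tr q (length tr)))"

text \<open>A wf_stack holds at most one frame per handler, so the frame found here is the
invocation that executed tr ! m.\<close>
definition post_dominators_pending ::
    "('h, 's, 'v) program \<Rightarrow> ('h \<times> 's) list \<Rightarrow> 's list \<Rightarrow> bool" where
  "post_dominators_pending P stk tr \<longleftrightarrow>
     (\<forall>m z. m < length tr \<longrightarrow> post_dominates P z (tr ! m) \<longrightarrow>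
        (\<forall>q. m < q \<and> q < length tr \<longrightarrow> tr ! q \<noteq> z) \<longrightarrow>
        (\<exists>n. (owner P (tr ! m), n) \<in> set stk \<and> weakly_post_dominates P z n))"

definition trace_dominators_executed :: "('h, 's, 'v) program \<Rightarrow> 's list \<Rightarrow> bool" where
  "trace_dominators_executed P tr \<longleftrightarrow>
     (\<forall>k x. k < length tr \<longrightarrow> x \<noteq> tr ! k \<longrightarrow> dominates_from P (owner P (tr ! k)) x (tr ! k) \<longrightarrow>
        (\<exists>q < k. tr ! q = x \<and> only_own_or_higher_between P (owner P (tr ! k)) tr q k))"

definition trace_post_dominators_executed :: "('h, 's, 'v) program \<Rightarrow> 's list \<Rightarrow> bool" where
  "trace_post_dominators_executed P tr \<longleftrightarrow>
     (\<forall>m k z. m < k \<longrightarrow> k < length tr \<longrightarrow> owner P (tr ! k) \<noteq> owner P (tr ! m) \<longrightarrow>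
        prio P (owner P (tr ! k)) \<le> prio P (owner P (tr ! m)) \<longrightarrow> post_dominates P z (tr ! m) \<longrightarrow>
        (\<exists>q. m < q \<and> q < k \<and> tr ! q = z))"

definition execution_invariant :: "('h, 's, 'v) program \<Rightarrow> ('h \<times> 's) list \<Rightarrow> 's list \<Rightarrow> bool" where
  "execution_invariant P stk tr \<longleftrightarrow> wf_stack P stk \<and> stack_dominators_executed P stk tr \<and>
     post_dominators_pending P stk tr \<and> trace_dominators_executed P tr \<and>
     trace_post_dominators_executed P tr"

lemma stack_dominators_executedD:
  "stack_dominators_executed P stk tr \<Longrightarrow> (h, n) \<in> set stk \<Longrightarrow> x \<noteq> n \<Longrightarrow> dominates_from P h x n \<Longrightarrow>
   \<exists>q < length tr. tr ! q = x \<and> only_own_or_higher_between P h tr q (length tr)"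
  unfolding stack_dominators_executed_def by blast

lemma post_dominators_pendingD:
  "post_dominators_pending P stk tr \<Longrightarrow> m < length tr \<Longrightarrow> post_dominates P z (tr ! m) \<Longrightarrow>
   \<forall>q. m < q \<and> q < length tr \<longrightarrow> tr ! q \<noteq> z \<Longrightarrow>
   \<exists>n. (owner P (tr ! m), n) \<in> set stk \<and> weakly_post_dominates P z n"
  unfolding post_dominators_pending_def by blast

lemma trace_dominators_executedD:
  "trace_dominators_executed P tr \<Longrightarrow> k < length tr \<Longrightarrow> x \<noteq> tr ! k \<Longrightarrow>
   dominates_from P (owner P (tr ! k)) x (tr ! k) \<Longrightarrow>
   \<exists>q < k. tr ! q = x \<and> only_own_or_higher_between P (owner P (tr ! k)) tr q k"
  unfolding trace_dominators_executed_def by blast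

lemma trace_post_dominators_executedD:
  "trace_post_dominators_executed P tr \<Longrightarrow> m < k \<Longrightarrow> k < length tr \<Longrightarrow>
   owner P (tr ! k) \<noteq> owner P (tr ! m) \<Longrightarrow> prio P (owner P (tr ! k)) \<le> prio P (owner P (tr ! m)) \<Longrightarrow>
   post_dominates P z (tr ! m) \<Longrightarrow> \<exists>q. m < q \<and> q < k \<and> tr ! q = z"
  unfolding trace_post_dominators_executed_def by blast

lemma wf_stack_Cons:
  "wf_stack P ((h, n) # stk) \<longleftrightarrow>
     owner P n = h \<and> (\<forall>(h0, n0) \<in> set stk. prio P h0 < prio P h) \<and> wf_stack P stk"
  unfolding wf_stack_def by auto

lemma wf_stack_owner: "wf_stack P ((h, n) # rest) \<Longrightarrow> owner P n = h"
  unfolding wf_stack_def by auto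

lemma wf_stack_below_top: "wf_stack P ((h, n) # rest) \<Longrightarrow> (h0, n0) \<in> set rest \<Longrightarrow> prio P h0 < prio P h"
  unfolding wf_stack_def by auto

section \<open>Preservation of the invariant\<close>

lemma trace_dominators_executed_snoc:
  assumes "wf_stack P ((h, n) # rest)" and "stack_dominators_executed P ((h, n) # rest) tr"
    and "trace_dominators_executed P tr"
  shows "trace_dominators_executed P (tr @ [n])"
  unfolding trace_dominators_executed_def
proof (intro allI impI)
  fix k x assume k: "k < length (tr @ [n])" and x: "x \<noteq> (tr @ [n]) ! k"
    and dom: "dominates_from P (owner P ((tr @ [n]) ! k)) x ((tr @ [n]) ! k)"
  show "\<exists>q < k. (tr @ [n]) ! q = x \<and>
          only_own_or_higher_between P (owner P ((tr @ [n]) ! k)) (tr @ [n]) q k"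
  proof (cases "k < length tr")
    case True
    then have at_k: "(tr @ [n]) ! k = tr ! k" by (rule nth_append_left)
    from x dom have "x \<noteq> tr ! k" "dominates_from P (owner P (tr ! k)) x (tr ! k)"
      unfolding at_k by simp_all
    then obtain q where "q < k" "tr ! q = x" "only_own_or_higher_between P (owner P (tr ! k)) tr q k"
      using trace_dominators_executedD[OF assms(3) True] by blast
    moreover from \<open>q < k\<close> True have "(tr @ [n]) ! q = tr ! q" by (simp add: nth_append)
    moreover from True have "only_own_or_higher_between P (owner P (tr ! k)) (tr @ [n]) q k
        = only_own_or_higher_between P (owner P (tr ! k)) tr q k"
      by (simp add: only_own_or_higher_between_append)
    ultimately show ?thesis unfolding at_k by blast
  next
    case False
    with k have k_eq: "k = length tr" by simp
    then have at_k: "(tr @ [n]) ! k = n" by simp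
    have "owner P n = h" using assms(1) by (rule wf_stack_owner)
    with x dom have "x \<noteq> n" "dominates_from P h x n" unfolding at_k by simp_all
    then obtain q where "q < k" "tr ! q = x" "only_own_or_higher_between P h tr q k"
      using stack_dominators_executedD[OF assms(2)] k_eq by fastforce
    moreover from \<open>q < k\<close> k_eq have "(tr @ [n]) ! q = tr ! q" by (simp add: nth_append)
    moreover from k_eq have "only_own_or_higher_between P h (tr @ [n]) q k
        = only_own_or_higher_between P h tr q k"
      by (simp add: only_own_or_higher_between_append)
    ultimately show ?thesis unfolding at_k \<open>owner P n = h\<close> by blast
  qed
qed

lemma trace_post_dominators_executed_snoc:
  assumes "wf_stack P ((h, n) # rest)" and "post_dominators_pending P ((h, n) # rest) tr"
    and "trace_post_dominators_executed P tr"
  shows "trace_post_dominators_executed P (tr @ [n])"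
  unfolding trace_post_dominators_executed_def
proof (intro allI impI)
  fix m k z assume mk: "m < k" and k: "k < length (tr @ [n])"
    and other: "owner P ((tr @ [n]) ! k) \<noteq> owner P ((tr @ [n]) ! m)"
    and le: "prio P (owner P ((tr @ [n]) ! k)) \<le> prio P (owner P ((tr @ [n]) ! m))"
    and pd: "post_dominates P z ((tr @ [n]) ! m)"
  have m: "m < length tr" using mk k by simp
  then have at_m: "(tr @ [n]) ! m = tr ! m" by (rule nth_append_left)
  show "\<exists>q. m < q \<and> q < k \<and> (tr @ [n]) ! q = z"
  proof (cases "k < length tr")
    case True
    then have "(tr @ [n]) ! k = tr ! k" by (rule nth_append_left)
    with other le pd at_m obtain q where "m < q" "q < k" "tr ! q = z"
      using trace_post_dominators_executedD[OF assms(3) mk True] by auto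
    with True show ?thesis by (metis nth_append_left order.strict_trans)
  next
    case False
    with k have k_eq: "k = length tr" by simp
    have own: "owner P n = h" using assms(1) by (rule wf_stack_owner)
    show ?thesis
    proof (rule ccontr)
      assume "\<nexists>q. m < q \<and> q < k \<and> (tr @ [n]) ! q = z"
      then have "\<forall>q. m < q \<and> q < length tr \<longrightarrow> tr ! q \<noteq> z"
        using k_eq by (metis nth_append_left)
      with pd at_m obtain n0 where "(owner P (tr ! m), n0) \<in> set ((h, n) # rest)"
        using post_dominators_pendingD[OF assms(2) m] by auto
      moreover have "owner P (tr ! m) \<noteq> h"
        using other at_m own k_eq by simp
      ultimately have "(owner P (tr ! m), n0) \<in> set rest" by auto
      then have "prio P (owner P (tr ! m)) < prio P h"
        by (rule wf_stack_below_top[OF assms(1)])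
      with le at_m own k_eq show False by simp
    qed
  qed
qed

lemma stack_dominators_executed_exec:
  assumes "wf_stack P ((h, n) # rest)" and "stack_dominators_executed P ((h, n) # rest) tr"
    and new: "\<And>h' n'. (h', n') \<in> set stk' \<Longrightarrow> (h', n') \<in> set rest \<or> (h' = h \<and> n' \<in> succ P n)"
  shows "stack_dominators_executed P stk' (tr @ [n])"
  unfolding stack_dominators_executed_def
proof (intro allI impI)
  fix h' n' x assume fr: "(h', n') \<in> set stk'" and x: "x \<noteq> n'" and dom: "dominates_from P h' x n'"
  have own: "owner P n = h" using assms(1) by (rule wf_stack_owner)
  have extend: "\<exists>q < length (tr @ [n]). (tr @ [n]) ! q = x \<and>
                  only_own_or_higher_between P h' (tr @ [n]) q (length (tr @ [n]))"
    if fr0: "(h', n0) \<in> set ((h, n) # rest)" and x0: "x \<noteq> n0" and dom0: "dominates_from P h' x n0"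
      and above: "owner P n = h' \<or> prio P h' < prio P (owner P n)" for n0
  proof -
    obtain q where q: "q < length tr" "tr ! q = x" "only_own_or_higher_between P h' tr q (length tr)"
      using stack_dominators_executedD[OF assms(2) fr0 x0 dom0] by blast
    have "only_own_or_higher_between P h' (tr @ [n]) q (Suc (length tr))"
      using q(3) above by (rule only_own_or_higher_between_snoc)
    moreover have "(tr @ [n]) ! q = x" using q(1,2) by (simp add: nth_append_left)
    ultimately show ?thesis using q(1) less_SucI by (metis length_append_singleton)
  qed
  from new[OF fr] show "\<exists>q < length (tr @ [n]). (tr @ [n]) ! q = x \<and>
                  only_own_or_higher_between P h' (tr @ [n]) q (length (tr @ [n]))"
  proof
    assume below: "(h', n') \<in> set rest"
    then have "prio P h' < prio P (owner P n)"
      unfolding own by (rule wf_stack_below_top[OF assms(1)])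
    with below x dom show ?thesis by (intro extend) auto
  next
    assume top: "h' = h \<and> n' \<in> succ P n"
    show ?thesis
    proof (cases "x = n")
      case True
      then show ?thesis unfolding only_own_or_higher_between_def by auto
    next
      case False
      with top x dom have "dominates_from P h' x n" by (blast intro: dominates_from_pred)
      with False top own show ?thesis by (intro extend) auto
    qed
  qed
qed

lemma post_dominators_pending_exec:
  assumes "post_dominators_pending P ((h, n) # rest) tr" and "owner P n = h"
    and "set rest \<subseteq> set stk'"
    and continue: "\<And>z. weakly_post_dominates P z n \<Longrightarrow> z \<noteq> n \<Longrightarrow>
                       \<exists>n'. (h, n') \<in> set stk' \<and> weakly_post_dominates P z n'"
  shows "post_dominators_pending P stk' (tr @ [n])"
  unfolding post_dominators_pending_def
proof (intro allI impI)
  fix m z assume m: "m < length (tr @ [n])" and pd: "post_dominates P z ((tr @ [n]) ! m)"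
    and later: "\<forall>q. m < q \<and> q < length (tr @ [n]) \<longrightarrow> (tr @ [n]) ! q \<noteq> z"
  show "\<exists>n0. (owner P ((tr @ [n]) ! m), n0) \<in> set stk' \<and> weakly_post_dominates P z n0"
  proof (cases "m < length tr")
    case True
    then have at_m: "(tr @ [n]) ! m = tr ! m" by (rule nth_append_left)
    from later True have "z \<noteq> n" by auto
    from later have "\<forall>q. m < q \<and> q < length tr \<longrightarrow> tr ! q \<noteq> z"
      by (metis length_append_singleton less_SucI nth_append_left)
    with pd at_m obtain n0 where
        fr: "(owner P (tr ! m), n0) \<in> set ((h, n) # rest)" and wpd: "weakly_post_dominates P z n0"
      using post_dominators_pendingD[OF assms(1) True] by auto
    from fr consider "(owner P (tr ! m), n0) \<in> set rest" | "owner P (tr ! m) = h" "n0 = n" by auto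
    then show ?thesis
    proof cases
      case 1 with assms(3) wpd at_m show ?thesis by auto
    next
      case 2 with continue wpd \<open>z \<noteq> n\<close> at_m show ?thesis by auto
    qed
  next
    case False
    with m have "m = length tr" by simp
    then have "(tr @ [n]) ! m = n" by simp
    with pd have "weakly_post_dominates P z n" "z \<noteq> n" by (simp_all add: post_dominates_imp_weakly)
    with continue assms(2) \<open>(tr @ [n]) ! m = n\<close> show ?thesis by auto
  qed
qed

lemma execution_invariant_exec:
  assumes "execution_invariant P ((h, n) # rest) tr" and "wf_stack P stk'"
    and "set rest \<subseteq> set stk'"
    and "\<And>h' n'. (h', n') \<in> set stk' \<Longrightarrow> (h', n') \<in> set rest \<or> (h' = h \<and> n' \<in> succ P n)"
    and "\<And>z. weakly_post_dominates P z n \<Longrightarrow> z \<noteq> n \<Longrightarrow>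
            \<exists>n'. (h, n') \<in> set stk' \<and> weakly_post_dominates P z n'"
  shows "execution_invariant P stk' (tr @ [n])"
proof -
  from assms(1) have wf: "wf_stack P ((h, n) # rest)"
    and dom: "stack_dominators_executed P ((h, n) # rest) tr"
    and pdom: "post_dominators_pending P ((h, n) # rest) tr"
    and tdom: "trace_dominators_executed P tr" and tpdom: "trace_post_dominators_executed P tr"
    unfolding execution_invariant_def by auto
  show ?thesis
    unfolding execution_invariant_def
    using assms(2) stack_dominators_executed_exec[OF wf dom assms(4)]
      post_dominators_pending_exec[OF pdom wf_stack_owner[OF wf] assms(3,5)]
      trace_dominators_executed_snoc[OF wf dom tdom]
      trace_post_dominators_executed_snoc[OF wf pdom tpdom]
    by blast
qed

lemma execution_invariant_start:
  assumes "wf_program P" and "execution_invariant P stk tr"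
    and "stk = [] \<or> prio P (fst (hd stk)) < prio P h"
  shows "execution_invariant P ((h, entry_node P h) # stk) tr"
proof -
  have own: "owner P (entry_node P h) = h" using assms(1) unfolding wf_program_def by auto
  from assms(2) have wf: "wf_stack P stk" and dom: "stack_dominators_executed P stk tr"
    and pdom: "post_dominators_pending P stk tr"
    unfolding execution_invariant_def by auto
  have "\<forall>(h0, n0) \<in> set stk. prio P h0 < prio P h"
  proof (cases stk)
    case (Cons fr stk0)
    with wf assms(3) show ?thesis by (cases fr) (fastforce simp: wf_stack_Cons)
  qed simp
  with wf own have "wf_stack P ((h, entry_node P h) # stk)" by (simp add: wf_stack_Cons)
  moreover have "stack_dominators_executed P ((h, entry_node P h) # stk) tr"
    using dom dominates_from_entry unfolding stack_dominators_executed_def by fastforce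
  moreover have "post_dominators_pending P ((h, entry_node P h) # stk) tr"
    using pdom unfolding post_dominators_pending_def by fastforce
  ultimately show ?thesis using assms(2) unfolding execution_invariant_def by blast
qed

lemma execution_invariant_istep:
  assumes "wf_program P"
  shows "istep P stk e stk' \<Longrightarrow> execution_invariant P stk tr \<Longrightarrow>
         execution_invariant P stk' (tr @ (case e of None \<Rightarrow> [] | Some n \<Rightarrow> [n]))"
proof (induction rule: istep.induct)
  case (start stk h)
  with assms show ?case by (simp add: execution_invariant_start)
next
  case (exec_exit n h rest)
  then have wf: "wf_stack P ((h, n) # rest)" unfolding execution_invariant_def by simp
  then have "owner P n = h" by (rule wf_stack_owner)
  with exec_exit.hyps have "weakly_post_dominates P z n \<Longrightarrow> z = n" for z
    by (simp add: weakly_post_dominates_exit)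
  with exec_exit.prems wf show ?case
    by (auto simp: wf_stack_Cons intro: execution_invariant_exec)
next
  case (exec_next n h n' rest)
  then have wf: "wf_stack P ((h, n) # rest)" unfolding execution_invariant_def by simp
  then have own: "owner P n = h" by (rule wf_stack_owner)
  with assms exec_next.hyps(2) have own': "owner P n' = h" unfolding wf_program_def by auto
  with wf own have "wf_stack P ((h, n') # rest)" by (simp add: wf_stack_Cons)
  moreover have "weakly_post_dominates P z n'" if "weakly_post_dominates P z n" "z \<noteq> n" for z
    using that exec_next.hyps(2) own own' by (simp add: weakly_post_dominates_succ)
  ultimately show ?case using exec_next.prems exec_next.hyps(2)
    by (auto intro!: execution_invariant_exec)
qed

lemma execution_imp_invariant:
  assumes "wf_program P"
  shows "execution P stk tr \<Longrightarrow> execution_invariant P stk tr"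
proof (induction rule: execution.induct)
  case init
  then show ?case
    unfolding execution_invariant_def wf_stack_def stack_dominators_executed_def
      post_dominators_pending_def trace_dominators_executed_def trace_post_dominators_executed_def
    by simp
next
  case (step stk tr e stk')
  then show ?case using execution_invariant_istep[OF assms] by blast
qed

section \<open>Covered loads and intercepted stores\<close>

lemma covered_load_not_reads_from_lower:
  assumes "trace_dominators_executed P tr" and "covered_load P (tr ! k)"
    and "owner P (tr ! m) \<noteq> owner P (tr ! k)"
    and "prio P (owner P (tr ! m)) \<le> prio P (owner P (tr ! k))"
  shows "\<not> reads_from P tr k m"
proof
  assume "reads_from P tr k m"
  then obtain v where mk: "m < k" "k < length tr" and load: "skind P (tr ! k) = Load v"
    and store: "skind P (tr ! m) = Store v"
    and no_store: "\<forall>r. m < r \<and> r < k \<longrightarrow> skind P (tr ! r) \<noteq> Store v"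
    unfolding reads_from_def by blast
  from assms(2) load obtain s' where s': "skind P s' = Store v" "dominates P s' (tr ! k)"
    unfolding covered_load_def by auto
  from s' load have "s' \<noteq> tr ! k" by auto
  moreover have "dominates_from P (owner P (tr ! k)) s' (tr ! k)"
    using s'(2) by (rule dominates_imp_dominates_from)
  ultimately obtain q where q: "q < k" "tr ! q = s'"
      and window: "only_own_or_higher_between P (owner P (tr ! k)) tr q k"
    using trace_dominators_executedD[OF assms(1) mk(2)] by blast
  have own: "owner P s' = owner P (tr ! k)" using s'(2) unfolding dominates_def by blast
  consider "m < q" | "m = q" | "q < m" by linarith
  then show False
  proof cases
    case 1 with no_store q s'(1) show ?thesis by blast
  next
    case 2 with q(2) own assms(3) show ?thesis by simp
  next
    case 3
    with window mk(1) have "owner P (tr ! m) = owner P (tr ! k) \<or>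
                            prio P (owner P (tr ! k)) < prio P (owner P (tr ! m))"
      unfolding only_own_or_higher_between_def by blast
    with assms(3,4) show ?thesis by linarith
  qed
qed

lemma intercepted_store_not_reads_from_higher:
  assumes "trace_post_dominators_executed P tr" and "intercepted_store P (tr ! m)"
    and "owner P (tr ! k) \<noteq> owner P (tr ! m)"
    and "prio P (owner P (tr ! k)) \<le> prio P (owner P (tr ! m))"
  shows "\<not> reads_from P tr k m"
proof
  assume "reads_from P tr k m"
  then obtain v where mk: "m < k" "k < length tr" and store: "skind P (tr ! m) = Store v"
    and no_store: "\<forall>r. m < r \<and> r < k \<longrightarrow> skind P (tr ! r) \<noteq> Store v"
    unfolding reads_from_def by blast
  from assms(2) store obtain s2 where "skind P s2 = Store v" "post_dominates P s2 (tr ! m)"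
    unfolding intercepted_store_def by auto
  with trace_post_dominators_executedD[OF assms(1) mk assms(3,4)] no_store show False by blast
qed

theorem theorem2:
  fixes P :: "('h, 's, 'v) program" and l s :: 's and v :: 'v
  assumes "wf_program P"
    and "skind P l = Load v"
    and "skind P s = Store v"
    and "owner P l \<noteq> owner P s"
    and "(covered_load P l \<and> intercepted_store P s)
         \<or> (covered_load P l \<and> prio P (owner P s) \<le> prio P (owner P l))
         \<or> (intercepted_store P s \<and> prio P (owner P l) \<le> prio P (owner P s))"
  shows "\<not> (\<exists>stk tr k m. execution P stk tr \<and> reads_from P tr k m \<and> tr ! k = l \<and> tr ! m = s)"
proof clarify
  fix stk tr k m
  assume "execution P stk tr" and rf: "reads_from P tr k m" and l: "l = tr ! k" and s: "s = tr ! m"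
  then have inv: "execution_invariant P stk tr" by (simp add: execution_imp_invariant[OF assms(1)])
  \<comment> \<open>case (1) is absorbed by the totality of the priority order\<close>
  have "covered_load P l \<and> prio P (owner P s) \<le> prio P (owner P l) \<or>
        intercepted_store P s \<and> prio P (owner P l) \<le> prio P (owner P s)"
    using assms(5) by linarith
  then show False
  proof
    assume "covered_load P l \<and> prio P (owner P s) \<le> prio P (owner P l)"
    with inv assms(4) have "\<not> reads_from P tr k m" unfolding l s execution_invariant_def
      by (intro covered_load_not_reads_from_lower) auto
    with rf show False by contradiction
  next
    assume "intercepted_store P s \<and> prio P (owner P l) \<le> prio P (owner P s)"
    with inv assms(4) have "\<not> reads_from P tr k m" unfolding l s execution_invariant_def
      by (intro intercepted_store_not_reads_from_higher) auto
    with rf show False by contradiction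
  qed
qed

end
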